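(* Let $T$ be a rooted binary ultrametric caterpillar tree on $X$ with $|X|=n\geq 3$ and strictly positive edge lengths, let $X'\subset X$, and let $\widetilde T=T_{\widetilde X}$ with $\widetilde X=X\setminus X'$. Then for all $x_i,x_j\in\widetilde X$, $FP_T(x_i)\geq FP_T(x_j)$ implies $FP_{\widetilde T}(x_i)\geq FP_{\widetilde T}(x_j)$.
   Context: A rooted binary phylogenetic $X$-tree ($X$ finite) is a rooted tree whose root $\rho$ has in-degree 0 and out-degree 2, all edges directed away from $\rho$, all other interior vertices have in-degree 1 and out-degree 2, and whose leaves are bijectively labelled by $X$. Every edge $e$ has a strictly positive length $\lambda_e$. The tree is ultrametric if the sum of edge lengths on the path from the root to every leaf is the same. A cherry is a pair of leaves with the same parent; a caterpillar tree has exactly one cherry. The Fair Proportion index of $x\in X$ is $FP_T(x)=\sum_{e\in P(T;\rho,x)}\lambda_e/D_e$, where $P(T;\rho,x)$ is the path from $\rho$ to $x$ and $D_e$ is the number of leaves descended from $e$. For $Y\subseteq X$, the induced subtree $T_Y$ is obtained from the minimal subtree of $T$ connecting $Y$ by suppressing all non-root vertices of in- and out-degree 1, adding the lengths of merged edges; if the root then has out-degree 1, it and its incident edge are deleted. *)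

theory Defs
  imports Main "HOL.Real"
begin

text \<open>A tree is either a
single leaf, or an interior vertex with exactly two children; each child is
paired with the length of the edge from the vertex to that child.\<close>

datatype 'a ptree = Leaf 'a | Node "real \<times> 'a ptree" "real \<times> 'a ptree"

fun leaf_list :: "'a ptree \<Rightarrow> 'a list" where
  "leaf_list (Leaf x) = [x]"
| "leaf_list (Node (l1, t1) (l2, t2)) = leaf_list t1 @ leaf_list t2"

definition leaves :: "'a ptree \<Rightarrow> 'a set" where
  "leaves t = set (leaf_list t)"

definition well_labelled :: "'a ptree \<Rightarrow> bool" where
  "well_labelled t = distinct (leaf_list t)"

fun pos_lengths :: "'a ptree \<Rightarrow> bool" where
  "pos_lengths (Leaf x) = True"
| "pos_lengths (Node (l1, t1) (l2, t2)) =
     (l1 > 0 \<and> l2 > 0 \<and> pos_lengths t1 \<and> pos_lengths t2)"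

fun root_dist :: "'a ptree \<Rightarrow> 'a \<Rightarrow> real" where
  "root_dist (Leaf y) x = 0"
| "root_dist (Node (l1, t1) (l2, t2)) x =
     (if x \<in> leaves t1 then l1 + root_dist t1 x
      else if x \<in> leaves t2 then l2 + root_dist t2 x else 0)"

definition ultrametric :: "'a ptree \<Rightarrow> bool" where
  "ultrametric t = (\<exists>c. \<forall>x \<in> leaves t. root_dist t x = c)"

fun num_cherries :: "'a ptree \<Rightarrow> nat" where
  "num_cherries (Leaf x) = 0"
| "num_cherries (Node (l1, Leaf a) (l2, Leaf b)) = 1"
| "num_cherries (Node (l1, t1) (l2, t2)) = num_cherries t1 + num_cherries t2"

definition caterpillar :: "'a ptree \<Rightarrow> bool" where
  "caterpillar t = (num_cherries t = 1)"

text \<open>Fair Proportion index: sum over edges e on the root-to-x path of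
lambda_e / D_e, where D_e is the number of leaves below e.\<close>
fun FP :: "'a ptree \<Rightarrow> 'a \<Rightarrow> real" where
  "FP (Leaf y) x = 0"
| "FP (Node (l1, t1) (l2, t2)) x =
     (if x \<in> leaves t1 then l1 / real (card (leaves t1)) + FP t1 x
      else if x \<in> leaves t2 then l2 / real (card (leaves t2)) + FP t2 x else 0)"

text \<open>Result: None if no leaf of Y is below; otherwise
Some (d, s) where s is the induced subtree (rooted at the most recent common
ancestor of the Y-leaves below) and d is the total length of the edges below the
current vertex that get merged into the edge entering it by suppression of
vertices with in- and out-degree 1.\<close>
fun restr :: "'a set \<Rightarrow> 'a ptree \<Rightarrow> (real \<times> 'a ptree) option" where
  "restr Y (Leaf x) = (if x \<in> Y then Some (0, Leaf x) else None)"
| "restr Y (Node (l1, t1) (l2, t2)) =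
     (case (restr Y t1, restr Y t2) of
        (Some (d1, s1), Some (d2, s2)) \<Rightarrow> Some (0, Node (l1 + d1, s1) (l2 + d2, s2))
      | (Some (d1, s1), None) \<Rightarrow> Some (l1 + d1, s1)
      | (None, Some (d2, s2)) \<Rightarrow> Some (l2 + d2, s2)
      | (None, None) \<Rightarrow> None)"

text \<open>Induced subtree T_Y: at the top level a root of out-degree 1 is deleted
together with its incident edge, i.e. the accumulated length is discarded.\<close>
definition induced :: "'a set \<Rightarrow> 'a ptree \<Rightarrow> 'a ptree" where
  "induced Y t = (case restr Y t of Some (d, s) \<Rightarrow> s | None \<Rightarrow> undefined)"

end

theory Submission
  imports Defs
begin

text \<open>In an ultrametric tree of height h, a leaf hanging directly below the root
has Fair Proportion index h, the maximum possible since FP is bounded by the root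
distance, while every leaf below an internal child of the root has index strictly
less than h.  In a caterpillar this decides every comparison involving the top
leaf, and comparisons among the remaining leaves are those of the caterpillar one
level down, shifted by a common constant.  Restriction keeps the pendant-leaf
structure, the height and these shifts, so induction along the caterpillar shows
that the FP ranking survives deletion of leaves.\<close>

lemma leaves_simps [simp]:
  "leaves (Leaf x) = {x}"
  "leaves (Node (l1, t1) (l2, t2)) = leaves t1 \<union> leaves t2"
  by (auto simp: leaves_def)

lemma finite_leaves [simp]: "finite (leaves t)"
  by (simp add: leaves_def)

lemma leaves_nonempty: "leaves t \<noteq> {}"
  by (induction t rule: leaf_list.induct) auto

lemma card_leaves_ge_1: "1 \<le> card (leaves t)"
  using leaves_nonempty[of t] by (simp add: Suc_le_eq card_gt_0_iff)

lemma distinct_leaf_list_Node: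
  "distinct (leaf_list (Node (l1, t1) (l2, t2))) \<longleftrightarrow>
     distinct (leaf_list t1) \<and> distinct (leaf_list t2) \<and> leaves t1 \<inter> leaves t2 = {}"
  by (auto simp: leaves_def)

lemma card_leaves_Node_ge_2:
  assumes "distinct (leaf_list (Node (l1, t1) (l2, t2)))"
  shows "2 \<le> card (leaves (Node (l1, t1) (l2, t2)))"
  using assms card_leaves_ge_1[of t1] card_leaves_ge_1[of t2]
  by (simp only: distinct_leaf_list_Node) (simp add: card_Un_disjoint)

lemma FP_le_root_dist: "pos_lengths t \<Longrightarrow> FP t x \<le> root_dist t x"
proof (induction t x rule: FP.induct)
  case (2 l1 t1 l2 t2 x)
  have "l1 / real (card (leaves t1)) \<le> l1" "l2 / real (card (leaves t2)) \<le> l2"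
    using card_leaves_ge_1[of t1] card_leaves_ge_1[of t2] "2.prems"
    by (simp_all add: divide_le_eq)
  with 2 show ?case by auto
qed simp

lemma restr_eq_None_iff: "restr Y t = None \<longleftrightarrow> leaves t \<inter> Y = {}"
  by (induction Y t rule: restr.induct) (auto split: option.splits)

lemma leaf_list_restr:
  "restr Y t = Some (d, s) \<Longrightarrow> leaf_list s = filter (\<lambda>x. x \<in> Y) (leaf_list t)"
  by (induction Y t arbitrary: d s rule: restr.induct)
     (auto split: option.splits if_splits simp: restr_eq_None_iff leaves_def filter_empty_conv)

lemma leaves_restr: "restr Y t = Some (d, s) \<Longrightarrow> leaves s = leaves t \<inter> Y"
  by (auto simp: leaves_def leaf_list_restr)

lemma distinct_restr:
  "restr Y t = Some (d, s) \<Longrightarrow> distinct (leaf_list t) \<Longrightarrow> distinct (leaf_list s)"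
  by (simp add: leaf_list_restr)

lemma pos_lengths_restr:
  "restr Y t = Some (d, s) \<Longrightarrow> pos_lengths t \<Longrightarrow> pos_lengths s \<and> d \<ge> 0"
  by (induction Y t arbitrary: d s rule: restr.induct)
     (auto split: option.splits if_splits)

lemma root_dist_restr:
  "restr Y t = Some (d, s) \<Longrightarrow> distinct (leaf_list t) \<Longrightarrow> z \<in> leaves s \<Longrightarrow>
     root_dist t z = d + root_dist s z"
  by (induction Y t arbitrary: d s rule: restr.induct)
     (auto split: option.splits if_splits simp: restr_eq_None_iff dest!: leaves_restr)

inductive comb :: "'a ptree \<Rightarrow> bool" where
  comb_Leaf: "comb (Leaf x)"
| comb_left_leaf: "comb s \<Longrightarrow> comb (Node (l1, Leaf a) (l2, s))"
| comb_right_leaf: "comb s \<Longrightarrow> comb (Node (l1, s) (l2, Leaf a))"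

lemma num_cherries_Node_ge_1: "1 \<le> num_cherries (Node p q)"
proof -
  have "(case t of Leaf _ \<Rightarrow> 0 | _ \<Rightarrow> 1) \<le> num_cherries t" for t :: "'a ptree"
    by (induction t rule: num_cherries.induct) auto
  from this[of "Node p q"] show ?thesis by simp
qed

lemma num_cherries_eq_0_iff: "num_cherries t = 0 \<longleftrightarrow> (\<exists>x. t = Leaf x)"
proof (cases t)
  case (Node p q)
  then show ?thesis using num_cherries_Node_ge_1[of p q] by simp
qed simp

text \<open>Cherry counts of two internal subtrees add up, so with at most one cherry
every interior vertex has a leaf child.\<close>

lemma comb_if_num_cherries_le_1: "num_cherries t \<le> 1 \<Longrightarrow> comb t"
proof (induction t rule: num_cherries.induct)
  case ("3_1" l1 p q l2 t2)
  then show ?case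
    using num_cherries_Node_ge_1[of p q] num_cherries_eq_0_iff[of t2]
    by (auto intro: comb.intros)
next
  case ("3_2" l1 t1 l2 p q)
  then show ?case
    using num_cherries_Node_ge_1[of p q] num_cherries_eq_0_iff[of t1]
    by (auto intro: comb.intros)
qed (auto intro: comb.intros)

fun swap :: "'a ptree \<Rightarrow> 'a ptree" where
  "swap (Leaf x) = Leaf x"
| "swap (Node p q) = Node q p"

lemma leaves_swap [simp]: "leaves (swap t) = leaves t"
  by (cases t rule: swap.cases) auto

lemma distinct_swap [simp]: "distinct (leaf_list (swap t)) \<longleftrightarrow> distinct (leaf_list t)"
  by (cases t rule: swap.cases) auto

lemma pos_lengths_swap [simp]: "pos_lengths (swap t) \<longleftrightarrow> pos_lengths t"
  by (cases t rule: swap.cases) auto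

lemma root_dist_swap: "distinct (leaf_list t) \<Longrightarrow> root_dist (swap t) x = root_dist t x"
  by (cases t rule: swap.cases) (auto simp: leaves_def)

lemma FP_swap: "distinct (leaf_list t) \<Longrightarrow> FP (swap t) x = FP t x"
  by (cases t rule: swap.cases) (auto simp: leaves_def)

lemma restr_swap:
  assumes "restr Y (swap t) = Some (d, s)"
  obtains s0 where "restr Y t = Some (d, s0)" and "s = s0 \<or> s = swap s0"
  using assms by (cases t rule: swap.cases) (auto split: option.splits)

definition keeps_FP_order :: "'a ptree \<Rightarrow> bool" where
  "keeps_FP_order t \<longleftrightarrow> (\<forall>Y d s x y. restr Y t = Some (d, s) \<longrightarrow>
     x \<in> leaves s \<longrightarrow> y \<in> leaves s \<longrightarrow> FP t y \<le> FP t x \<longrightarrow> FP s y \<le> FP s x)"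

lemma keeps_FP_order_swap:
  assumes "distinct (leaf_list t)" and "keeps_FP_order t"
  shows "keeps_FP_order (swap t)"
  unfolding keeps_FP_order_def
proof (intro allI impI)
  fix Y d s x y
  assume r: "restr Y (swap t) = Some (d, s)" and x: "x \<in> leaves s" and y: "y \<in> leaves s"
    and le: "FP (swap t) y \<le> FP (swap t) x"
  obtain s0 where r0: "restr Y t = Some (d, s0)" and s: "s = s0 \<or> s = swap s0"
    using restr_swap[OF r] .
  have "distinct (leaf_list s0)" using distinct_restr[OF r0 assms(1)] .
  then have "FP s = FP s0" using s by (auto simp: FP_swap)
  moreover have "FP s0 y \<le> FP s0 x"
    using assms x y le s r0 by (auto simp: keeps_FP_order_def FP_swap)
  ultimately show "FP s y \<le> FP s x" by simp
qed

lemma ultrametric_Node_subtrees: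
  assumes "leaves t1 \<inter> leaves t2 = {}" and "ultrametric (Node (l1, t1) (l2, t2))"
  shows "ultrametric t1" and "ultrametric t2"
proof -
  obtain c where c: "\<forall>z \<in> leaves t1 \<union> leaves t2. root_dist (Node (l1, t1) (l2, t2)) z = c"
    using assms(2) by (auto simp: ultrametric_def)
  have "\<forall>z \<in> leaves t1. root_dist t1 z = c - l1" using c by auto
  then show "ultrametric t1" by (auto simp: ultrametric_def)
  have "\<forall>z \<in> leaves t2. root_dist t2 z = c - l2" using c assms(1) by fastforce
  then show "ultrametric t2" by (auto simp: ultrametric_def)
qed

lemma ultrametric_swap: "distinct (leaf_list t) \<Longrightarrow> ultrametric (swap t) \<longleftrightarrow> ultrametric t"
  by (simp add: ultrametric_def root_dist_swap)

lemma restr_pendant_leaf: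
  assumes "restr Y (Node (la, Leaf a) (ls, s)) = Some (d, s')" and "restr Y s = Some (d2, s2)"
  shows "a \<in> Y \<and> d = 0 \<and> s' = Node (la, Leaf a) (ls + d2, s2) \<or> a \<notin> Y \<and> s' = s2"
  using assms by (auto split: if_splits)

text \<open>The pendant edge below an internal vertex is shared by at least two leaves,
so it contributes at most half its length to their Fair Proportion indices.\<close>

lemma FP_below_internal_edge_lt_height:
  assumes "pos_lengths s" and "2 \<le> card (leaves s)" and "l > 0"
    and "z \<in> leaves s" and "root_dist s z = h - l"
  shows "l / real (card (leaves s)) + FP s z < h"
proof -
  have "l / real (card (leaves s)) \<le> l / 2"
    using assms(2,3) by (intro divide_left_mono) simp_all
  moreover have "FP s z \<le> h - l" using FP_le_root_dist[OF assms(1), of z] assms(5) by simp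
  ultimately show ?thesis using assms(3) by linarith
qed

lemma FP_restr_le_height:
  assumes "restr Y t = Some (d, s)" and "distinct (leaf_list t)" and "pos_lengths t"
    and "\<forall>z \<in> leaves t. root_dist t z = h" and "z \<in> leaves s"
  shows "FP s z \<le> h"
proof -
  have "FP s z \<le> root_dist s z"
    using pos_lengths_restr[OF assms(1,3)] by (simp add: FP_le_root_dist)
  also have "\<dots> = h - d"
    using root_dist_restr[OF assms(1,2,5)] leaves_restr[OF assms(1)] assms(4,5) by auto
  finally show ?thesis using pos_lengths_restr[OF assms(1,3)] by linarith
qed

lemma FP_pendant_leaf_le_imp_cherry:
  assumes dist: "distinct (leaf_list (Node (la, Leaf a) (ls, s)))"
    and pos: "pos_lengths (Node (la, Leaf a) (ls, s))"
    and height: "\<forall>z \<in> leaves (Node (la, Leaf a) (ls, s)).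
      root_dist (Node (la, Leaf a) (ls, s)) z = h"
    and x: "x \<in> leaves s"
    and le: "FP (Node (la, Leaf a) (ls, s)) a \<le> FP (Node (la, Leaf a) (ls, s)) x"
  shows "s = Leaf x"
proof (cases s)
  case (Node p q)
  obtain lp tp lq tq where pq: "s = Node (lp, tp) (lq, tq)" using Node by (cases p, cases q) auto
  have a_s: "a \<notin> leaves s" using dist by (simp add: leaves_def)
  have "distinct (leaf_list s)" using dist by simp
  then have "2 \<le> card (leaves s)" using card_leaves_Node_ge_2 pq by metis
  moreover have "x \<noteq> a" using x a_s by auto
  then have "root_dist s x = h - ls" using height x by auto
  ultimately have "ls / real (card (leaves s)) + FP s x < h"
    using FP_below_internal_edge_lt_height[of s ls x h] pos x by simp
  moreover have "la = h" using height a_s by simp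
  ultimately show ?thesis using le x \<open>x \<noteq> a\<close> by simp
qed (use x in simp)

lemma keeps_FP_order_pendant_leaf:
  fixes la ls :: real and a :: 'a and s t :: "'a ptree"
  defines "t \<equiv> Node (la, Leaf a) (ls, s)"
  assumes dist: "distinct (leaf_list t)" and pos: "pos_lengths t"
    and ultra: "ultrametric t" and IH: "keeps_FP_order s"
  shows "keeps_FP_order t"
  unfolding keeps_FP_order_def
proof (intro allI impI)
  fix Y d s' x y
  assume r: "restr Y t = Some (d, s')" and x: "x \<in> leaves s'" and y: "y \<in> leaves s'"
    and le: "FP t y \<le> FP t x"
  obtain h where height: "\<forall>z \<in> leaves t. root_dist t z = h"
    using ultra by (auto simp: ultrametric_def)
  have a_s: "a \<notin> leaves s" using dist by (simp add: t_def leaves_def)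
  have la: "la = h" using height a_s by (simp add: t_def)
  have leaves_s': "leaves s' = insert a (leaves s) \<inter> Y"
    using leaves_restr[OF r] by (simp add: t_def)
  have restr_s: "\<exists>d2 s2. restr Y s = Some (d2, s2) \<and> z \<in> leaves s2"
    if "z \<in> leaves s" "z \<in> Y" for z
    using that leaves_restr[of Y s] by (cases "restr Y s") (auto simp: restr_eq_None_iff)
  consider "x \<in> leaves s" "y \<in> leaves s" | "x = a" "y \<in> leaves s" | "y = a" "x \<in> leaves s"
    | "x = y"
    using x y leaves_s' by auto
  then show "FP s' y \<le> FP s' x"
  proof cases
    case 1
    then obtain d2 s2 where r2: "restr Y s = Some (d2, s2)" and "x \<in> leaves s2"
      using restr_s x leaves_s' by blast
    moreover have "y \<in> leaves s2" using 1 y leaves_s' leaves_restr[OF r2] by auto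
    moreover have "x \<noteq> a" "y \<noteq> a" using 1 a_s by auto
    then have "FP s y \<le> FP s x" using le 1 by (simp add: t_def)
    ultimately have "FP s2 y \<le> FP s2 x" using IH by (auto simp: keeps_FP_order_def)
    then show ?thesis
      using restr_pendant_leaf[OF r[unfolded t_def] r2] \<open>x \<in> leaves s2\<close> \<open>y \<in> leaves s2\<close>
        leaves_restr[OF r2] a_s by auto
  next
    case 2
    then obtain d2 s2 where r2: "restr Y s = Some (d2, s2)"
      using restr_s y leaves_s' by blast
    then have "s' = Node (h, Leaf a) (ls + d2, s2)" and "a \<notin> leaves s2"
      using restr_pendant_leaf[OF r[unfolded t_def] r2] 2 x leaves_s' la
        leaves_restr[OF r2] a_s by auto
    then show ?thesis using 2 FP_restr_le_height[OF r dist pos height y] by simp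
  next
    case 3
    then have "s = Leaf x"
      using FP_pendant_leaf_le_imp_cherry[of la a ls s h x] dist pos height le
      unfolding t_def by simp
    moreover have "ls = h" using height 3 a_s \<open>s = Leaf x\<close> by (auto simp: t_def)
    ultimately have "s' = Node (h, Leaf a) (h, Leaf x)"
      using r 3 x y leaves_s' la by (auto simp: t_def)
    then show ?thesis using 3 a_s \<open>s = Leaf x\<close> by simp
  qed simp
qed

lemma keeps_FP_order_comb:
  "comb t \<Longrightarrow> distinct (leaf_list t) \<Longrightarrow> pos_lengths t \<Longrightarrow> ultrametric t \<Longrightarrow>
     keeps_FP_order t"
proof (induction t rule: comb.induct)
  case (comb_Leaf x)
  then show ?case by (auto simp: keeps_FP_order_def split: if_splits)
next
  case (comb_left_leaf s l1 a l2)
  then have "a \<notin> leaves s" by (simp add: leaves_def)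
  with comb_left_leaf show ?case
    using ultrametric_Node_subtrees(2)[of "Leaf a" s]
    by (intro keeps_FP_order_pendant_leaf) auto
next
  case (comb_right_leaf s l1 l2 a)
  let ?t = "Node (l2, Leaf a) (l1, s)"
  have "swap ?t = Node (l1, s) (l2, Leaf a)" by simp
  moreover have "distinct (leaf_list ?t)" "pos_lengths ?t" "ultrametric ?t"
    using comb_right_leaf.prems ultrametric_swap[of ?t] by auto
  moreover have "a \<notin> leaves s" using comb_right_leaf.prems(1) by (simp add: leaves_def)
  then have "keeps_FP_order s"
    using comb_right_leaf ultrametric_Node_subtrees(1)[of s "Leaf a"] by auto
  ultimately show ?case using keeps_FP_order_pendant_leaf keeps_FP_order_swap by metis
qed

theorem proposition1:
  fixes T :: "'a ptree" and X X' :: "'a set" and xi xj :: 'a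
  assumes "well_labelled T"
    and "X = leaves T"
    and "card X \<ge> 3"
    and "pos_lengths T"
    and "ultrametric T"
    and "caterpillar T"
    and "X' \<subseteq> X"
    and "xi \<in> X - X'" and "xj \<in> X - X'"
    and "FP T xi \<ge> FP T xj"
  shows "FP (induced (X - X') T) xi \<ge> FP (induced (X - X') T) xj"
proof -
  have "comb T" using assms(6) by (simp add: caterpillar_def comb_if_num_cherries_le_1)
  then have keeps: "keeps_FP_order T"
    using assms(1,4,5) keeps_FP_order_comb by (auto simp: well_labelled_def)
  obtain d s where r: "restr (X - X') T = Some (d, s)"
    using assms(2,8) by (cases "restr (X - X') T") (auto simp: restr_eq_None_iff)
  have "xi \<in> leaves s" "xj \<in> leaves s" using leaves_restr[OF r] assms(2,8,9) by auto
  then have "FP s xj \<le> FP s xi" using keeps r assms(10) by (auto simp: keeps_FP_order_def)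
  then show ?thesis using r by (simp add: induced_def)
qed

end
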